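(* Let $B$ be an almost complex Banach manifold, $z_0\in B$, $M>0$, and let $f$ be a holomorphic function on $B$ with $0<|f|<M$ on $B$. Then for all $z\in B$, $$|f(z)|\le |f(z_0)|^{\alpha(z)}M^{1-\alpha(z)},\qquad \alpha(z)=e^{-\kappa_B(z,z_0)},$$ where $\kappa_B$ is the Kobayashi distance of $B$ (and $\alpha(z)=0$ if $\kappa_B(z,z_0)=\infty$).
   Context: $\mathbb D$ is the open unit disk. A holomorphic disk in an almost complex Banach manifold $B$ is a $J$-holomorphic map $h:\mathbb D\to B$; a holomorphic function on $B$ is a $J$-holomorphic map $B\to\mathbb C$ (complex-linear real differential). Kobayashi distance: $\kappa_B(z,z')=\inf\sum_{j=1}^N\log\frac{1+|\zeta_j|}{1-|\zeta_j|}$ over all chains of holomorphic disks $h_j:\mathbb D\to B$ and points $\zeta_j\in\mathbb D$ with $h_1(0)=z'$, $h_{j+1}(0)=h_j(\zeta_j)$ ($1\le j<N$), $h_N(\zeta_N)=z$; it is $\infty$ if no such chain exists. *)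

theory Defs
  imports "HOL-Analysis.Analysis"
begin

text \<open>The manifold is the whole topological space of type 'b.  The almost complex structure is given in
  local coordinates: Jc (U,phi) x is a bounded real-linear operator on 'e for
  x in phi ` U, with Jc^2 = -id, continuous in x, and compatible with the
  differentials of the transition maps.\<close>

type_synonym ('b, 'e) chart = "'b set \<times> ('b \<Rightarrow> 'e)"

definition is_chart :: "('b::topological_space, 'e::banach) chart \<Rightarrow> bool" where
  "is_chart c \<longleftrightarrow> (case c of (U, \<phi>) \<Rightarrow>
     open U \<and> continuous_on U \<phi> \<and> inj_on \<phi> U \<and> open (\<phi> ` U) \<and>
     continuous_on (\<phi> ` U) (inv_into U \<phi>))"

definition transition :: "('b, 'e) chart \<Rightarrow> ('b, 'e) chart \<Rightarrow> 'e \<Rightarrow> 'e" where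
  "transition c d = snd d \<circ> inv_into (fst c) (snd c)"

definition overlap :: "('b, 'e) chart \<Rightarrow> ('b, 'e) chart \<Rightarrow> 'e set" where
  "overlap c d = snd c ` (fst c \<inter> fst d)"

definition almost_complex_banach_manifold ::
  "('b::topological_space, 'e::banach) chart set \<Rightarrow> (('b, 'e) chart \<Rightarrow> 'e \<Rightarrow> 'e \<Rightarrow>\<^sub>L 'e) \<Rightarrow> bool" where
  "almost_complex_banach_manifold A Jc \<longleftrightarrow>
     (\<forall>c\<in>A. is_chart c) \<and>
     (\<Union>c\<in>A. fst c) = UNIV \<and>
     (\<forall>c\<in>A. \<forall>d\<in>A. \<exists>Dt :: 'e \<Rightarrow> 'e \<Rightarrow>\<^sub>L 'e.
        continuous_on (overlap c d) Dt \<and>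
        (\<forall>x\<in>overlap c d. (transition c d has_derivative blinfun_apply (Dt x)) (at x) \<and>
           Dt x o\<^sub>L Jc c x = Jc d (transition c d x) o\<^sub>L Dt x)) \<and>
     (\<forall>c\<in>A. continuous_on (snd c ` fst c) (Jc c) \<and>
        (\<forall>x\<in>snd c ` fst c. Jc c x o\<^sub>L Jc c x = - id_blinfun))"

definition holomorphic_disk ::
  "('b::topological_space, 'e::banach) chart set \<Rightarrow> (('b, 'e) chart \<Rightarrow> 'e \<Rightarrow> 'e \<Rightarrow>\<^sub>L 'e)
     \<Rightarrow> (complex \<Rightarrow> 'b) \<Rightarrow> bool" where
  "holomorphic_disk A Jc h \<longleftrightarrow>
     continuous_on (ball 0 1) h \<and>
     (\<forall>c\<in>A. \<forall>\<zeta>\<in>ball 0 1. h \<zeta> \<in> fst c \<longrightarrow>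
        (\<exists>L. ((snd c \<circ> h) has_derivative L) (at \<zeta>) \<and>
             (\<forall>v. L (\<i> * v) = Jc c (snd c (h \<zeta>)) (L v))))"

definition holomorphic_function ::
  "('b::topological_space, 'e::banach) chart set \<Rightarrow> (('b, 'e) chart \<Rightarrow> 'e \<Rightarrow> 'e \<Rightarrow>\<^sub>L 'e)
     \<Rightarrow> ('b \<Rightarrow> complex) \<Rightarrow> bool" where
  "holomorphic_function A Jc f \<longleftrightarrow>
     (\<forall>c\<in>A. \<forall>x\<in>snd c ` fst c.
        (\<exists>L. ((f \<circ> inv_into (fst c) (snd c)) has_derivative L) (at x) \<and>
             (\<forall>v. L (Jc c x v) = \<i> * L v)))"

definition kobayashi_chain ::
  "('b::topological_space, 'e::banach) chart set \<Rightarrow> (('b, 'e) chart \<Rightarrow> 'e \<Rightarrow> 'e \<Rightarrow>\<^sub>L 'e)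
     \<Rightarrow> nat \<Rightarrow> (nat \<Rightarrow> complex \<Rightarrow> 'b) \<Rightarrow> (nat \<Rightarrow> complex) \<Rightarrow> 'b \<Rightarrow> 'b \<Rightarrow> bool" where
  "kobayashi_chain A Jc N h \<zeta> z z' \<longleftrightarrow>
     N \<ge> 1 \<and>
     (\<forall>j<N. holomorphic_disk A Jc (h j) \<and> norm (\<zeta> j) < 1) \<and>
     h 0 0 = z' \<and>
     (\<forall>j. j + 1 < N \<longrightarrow> h (j + 1) 0 = h j (\<zeta> j)) \<and>
     h (N - 1) (\<zeta> (N - 1)) = z"

text \<open>Kobayashi distance (value \<infinity> if no chain exists, as Inf {} = \<infinity> in ereal).\<close>

definition kobayashi_dist ::
  "('b::topological_space, 'e::banach) chart set \<Rightarrow> (('b, 'e) chart \<Rightarrow> 'e \<Rightarrow> 'e \<Rightarrow>\<^sub>L 'e)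
     \<Rightarrow> 'b \<Rightarrow> 'b \<Rightarrow> ereal" where
  "kobayashi_dist A Jc z z' =
     Inf {ereal (\<Sum>j<N. ln ((1 + norm (\<zeta> j)) / (1 - norm (\<zeta> j)))) | N h \<zeta>.
            kobayashi_chain A Jc N h \<zeta> z z'}"

definition exp_neg_ereal :: "ereal \<Rightarrow> real" where
  "exp_neg_ereal k = (case k of ereal r \<Rightarrow> exp (- r) | PInfty \<Rightarrow> 0 | MInfty \<Rightarrow> 0)"

end

theory Submission
  imports Defs "HOL-Complex_Analysis.Complex_Analysis"
begin

text \<open>Along a holomorphic disk h, the function f \<circ> h maps the unit disk into the punctured
  disk of radius M, so a holomorphic logarithm G of (f \<circ> h) / M takes values in the left
  half-plane.  Composing G with the Moebius map w \<mapsto> (w - G 0) / (w + cnj (G 0)) and applying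
  Schwarz's lemma yields Harnack's inequality
  u (h \<zeta>) \<le> u (h 0) (1 - |\<zeta>|) / (1 + |\<zeta>|) for the negative function u = ln (|f| / M).
  Along a Kobayashi chain these factors multiply to exp of minus the length of the chain,
  so u z \<le> u z0 exp (- \<kappa>(z, z0)); exponentiating gives the claim.\<close>

lemma norm_diff_lt_norm_add_cnj:
  fixes w a :: complex
  assumes "Re w < 0" "Re a < 0"
  shows "norm (w - a) < norm (w + cnj a)"
proof -
  have "Re w * Re a > 0" using assms by (simp add: mult_neg_neg)
  then have "(norm (w - a))\<^sup>2 < (norm (w + cnj a))\<^sup>2"
    unfolding cmod_power2 by (simp add: power2_eq_square algebra_simps)
  then show ?thesis by (simp add: power_less_imp_less_base)
qed

lemma Re_le_of_norm_diff_le_norm_add_cnj: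
  fixes w a :: complex and r :: real
  assumes "Re w < 0" "Re a < 0" "0 \<le> r" "r < 1"
    and "norm (w - a) \<le> r * norm (w + cnj a)"
  shows "Re w \<le> Re a * ((1 - r) / (1 + r))"
proof -
  have "(norm (w - a))\<^sup>2 \<le> (r * norm (w + cnj a))\<^sup>2"
    using assms by (simp add: power_mono)
  then have "(Re w - Re a)\<^sup>2 + (Im w - Im a)\<^sup>2 \<le> r\<^sup>2 * ((Re w + Re a)\<^sup>2 + (Im w - Im a)\<^sup>2)"
    by (simp add: cmod_power2 power_mult_distrib)
  moreover have "r\<^sup>2 * (Im w - Im a)\<^sup>2 \<le> (Im w - Im a)\<^sup>2"
    using assms by (simp add: mult_left_le_one_le power_le_one)
  ultimately have "(Re w - Re a)\<^sup>2 \<le> r\<^sup>2 * (Re w + Re a)\<^sup>2"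
    by (simp add: distrib_left)
  then have "(Re w - Re a)\<^sup>2 \<le> (r * (Re w + Re a))\<^sup>2"
    by (simp add: power_mult_distrib)
  then have "\<bar>Re w - Re a\<bar> \<le> \<bar>r * (Re w + Re a)\<bar>"
    using abs_le_square_iff by blast
  also have "\<dots> = r * (- Re w - Re a)"
    using assms by (simp add: abs_mult)
  finally have "Re w * (1 + r) \<le> Re a * (1 - r)"
    by (simp add: algebra_simps)
  then show ?thesis using assms by (simp add: field_simps)
qed

lemma Schwarz_left_halfplane:
  fixes G :: "complex \<Rightarrow> complex"
  assumes holG: "G holomorphic_on ball 0 1"
    and neg: "\<And>x. x \<in> ball 0 1 \<Longrightarrow> Re (G x) < 0"
    and \<zeta>: "norm \<zeta> < 1"
  shows "Re (G \<zeta>) \<le> Re (G 0) * ((1 - norm \<zeta>) / (1 + norm \<zeta>))"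
proof -
  define a where "a = G 0"
  have a: "Re a < 0" using neg[of 0] by (simp add: a_def)
  have nz: "G x + cnj a \<noteq> 0" if "x \<in> ball 0 1" for x
  proof
    assume "G x + cnj a = 0"
    then have "Re (G x + cnj a) = 0" by simp
    then show False using neg[OF that] a by simp
  qed
  define F where "F x = (G x - a) / (G x + cnj a)" for x
  have "F holomorphic_on ball 0 1"
    unfolding F_def using holG nz by (intro holomorphic_intros) auto
  moreover have "F 0 = 0" by (simp add: F_def a_def)
  moreover have "norm (F x) < 1" if "norm x < 1" for x
    using norm_diff_lt_norm_add_cnj[OF neg a] nz that
    by (simp add: F_def norm_divide divide_less_eq)
  ultimately have "norm (F \<zeta>) \<le> norm \<zeta>"
    using Schwarz_Lemma(1) \<zeta> by blast
  then have "norm (G \<zeta> - a) \<le> norm \<zeta> * norm (G \<zeta> + cnj a)"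
    using nz[of \<zeta>] \<zeta> by (simp add: F_def norm_divide divide_le_eq)
  then show ?thesis
    using Re_le_of_norm_diff_le_norm_add_cnj[OF neg a norm_ge_zero \<zeta>] \<zeta> by (simp add: a_def)
qed

lemma ln_norm_Harnack:
  fixes g :: "complex \<Rightarrow> complex" and M :: real
  assumes holg: "g holomorphic_on ball 0 1"
    and bd: "\<And>x. x \<in> ball 0 1 \<Longrightarrow> 0 < norm (g x) \<and> norm (g x) < M"
    and \<zeta>: "norm \<zeta> < 1"
  shows "ln (norm (g \<zeta>) / M) \<le> ln (norm (g 0) / M) * ((1 - norm \<zeta>) / (1 + norm \<zeta>))"
proof -
  have M: "M > 0" using bd[of 0] by (meson centre_in_ball less_trans zero_less_one)
  have "(\<lambda>x. g x / complex_of_real M) holomorphic_on ball 0 1"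
    using holg by (intro holomorphic_intros) auto
  moreover have "g x / complex_of_real M \<noteq> 0" if "x \<in> ball 0 1" for x
    using bd[OF that] M by fastforce
  ultimately obtain G where holG: "G holomorphic_on ball 0 1"
    and expG: "\<And>x. x \<in> ball 0 1 \<Longrightarrow> exp (G x) = g x / complex_of_real M"
    using holomorphic_logarithm_exists[OF convex_ball open_ball, of _ 0] by blast
  have ReG: "Re (G x) = ln (norm (g x) / M)" if "x \<in> ball 0 1" for x
  proof -
    have "exp (Re (G x)) = norm (g x) / M"
      using arg_cong[OF expG[OF that], of norm] M by (simp add: norm_divide norm_exp_eq_Re)
    then show ?thesis by (metis ln_exp)
  qed
  have "Re (G x) < 0" if "x \<in> ball 0 1" for x
    using bd[OF that] M by (simp add: ReG[OF that] ln_less_zero)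
  then show ?thesis
    using Schwarz_left_halfplane[OF holG _ \<zeta>] ReG[of 0] ReG[of \<zeta>] \<zeta> by simp
qed

lemma complex_linear_eq_mult:
  fixes D :: "complex \<Rightarrow> complex"
  assumes "linear D" "\<And>v. D (\<i> * v) = \<i> * D v"
  shows "D = (\<lambda>v. D 1 * v)"
proof
  fix v :: complex
  have v: "v = Re v *\<^sub>R 1 + Im v *\<^sub>R (\<i> * 1)"
    by (simp add: complex_eq_iff)
  have "D v = Re v *\<^sub>R D 1 + Im v *\<^sub>R D (\<i> * 1)"
    by (subst v) (simp add: linear_add[OF assms(1)] linear_scale[OF assms(1)])
  also have "\<dots> = D 1 * v" using assms(2)[of 1]
    by (simp add: scaleR_conv_of_real complex_eq_iff algebra_simps)
  finally show "D v = D 1 * v" .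
qed

lemma holomorphic_function_comp_disk:
  fixes A :: "('b::topological_space, 'e::banach) chart set"
  assumes man: "almost_complex_banach_manifold A Jc"
    and hf: "holomorphic_function A Jc f"
    and hd: "holomorphic_disk A Jc h"
  shows "(f \<circ> h) holomorphic_on ball 0 1"
  unfolding holomorphic_on_def
proof
  fix \<zeta> :: complex assume \<zeta>: "\<zeta> \<in> ball 0 1"
  have "h \<zeta> \<in> (\<Union>c\<in>A. fst c)" using man by (simp add: almost_complex_banach_manifold_def)
  then obtain U \<phi> where cA: "(U, \<phi>) \<in> A" and hU: "h \<zeta> \<in> U" by auto
  have "is_chart (U, \<phi>)" using man cA by (simp add: almost_complex_banach_manifold_def)
  then have oU: "open U" and inj: "inj_on \<phi> U" by (auto simp: is_chart_def)
  obtain L where L: "((\<phi> \<circ> h) has_derivative L) (at \<zeta>)"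
    and LJ: "\<And>v. L (\<i> * v) = Jc (U, \<phi>) (\<phi> (h \<zeta>)) (L v)"
    using hd cA \<zeta> hU unfolding holomorphic_disk_def by fastforce
  obtain Lf where Lf: "((f \<circ> inv_into U \<phi>) has_derivative Lf) (at (\<phi> (h \<zeta>)))"
    and LfJ: "\<And>v. Lf (Jc (U, \<phi>) (\<phi> (h \<zeta>)) v) = \<i> * Lf v"
    using hf cA hU unfolding holomorphic_function_def by fastforce
  have "((\<lambda>w. (f \<circ> inv_into U \<phi>) ((\<phi> \<circ> h) w)) has_derivative (\<lambda>v. Lf (L v))) (at \<zeta>)"
    using has_derivative_compose[OF L, of "f \<circ> inv_into U \<phi>" Lf] Lf by (simp add: o_def)
  moreover have "open (ball 0 1 \<inter> h -` U)"
    using hd by (intro continuous_open_preimage[OF _ open_ball oU]) (simp add: holomorphic_disk_def)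
  moreover have "\<zeta> \<in> ball 0 1 \<inter> h -` U" using \<zeta> hU by simp
  ultimately have D: "((f \<circ> h) has_derivative (\<lambda>v. Lf (L v))) (at \<zeta>)"
    by (rule has_derivative_transform_within_open) (use inj in auto)
  have "(\<lambda>v. Lf (L v)) = (\<lambda>v. Lf (L 1) * v)"
    using complex_linear_eq_mult[OF has_derivative_linear[OF D]] LJ LfJ by simp
  then have "((f \<circ> h) has_field_derivative Lf (L 1)) (at \<zeta>)"
    unfolding has_field_derivative_def using D by metis
  then show "(f \<circ> h) field_differentiable at \<zeta> within ball 0 1"
    unfolding field_differentiable_def by (meson has_field_derivative_at_within)
qed

lemma kobayashi_chain_Harnack:
  assumes ch: "kobayashi_chain A Jc N h \<zeta> z z'"
    and harnack: "\<And>g \<xi>. holomorphic_disk A Jc g \<Longrightarrow> norm \<xi> < 1 \<Longrightarrow>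
                     u (g \<xi>) \<le> u (g 0) * ((1 - norm \<xi>) / (1 + norm \<xi>))"
  shows "u z \<le> u z' * (\<Prod>j<N. (1 - norm (\<zeta> j)) / (1 + norm (\<zeta> j)))"
proof -
  define c where "c j = (1 - norm (\<zeta> j)) / (1 + norm (\<zeta> j))" for j
  have c: "c j \<ge> 0" "u (h j (\<zeta> j)) \<le> u (h j 0) * c j" if "j < N" for j
    using ch that harnack[of "h j" "\<zeta> j"] by (auto simp: kobayashi_chain_def c_def)
  have "u (h k (\<zeta> k)) \<le> u z' * (\<Prod>j<Suc k. c j)" if "k < N" for k
    using that
  proof (induction k)
    case 0
    then show ?case using c(2)[of 0] ch by (simp add: kobayashi_chain_def)
  next
    case (Suc k)
    have "u (h (Suc k) (\<zeta> (Suc k))) \<le> u (h k (\<zeta> k)) * c (Suc k)"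
      using c(2)[OF Suc.prems] ch Suc.prems by (simp add: kobayashi_chain_def)
    also have "\<dots> \<le> u z' * (\<Prod>j<Suc k. c j) * c (Suc k)"
      using Suc c(1)[OF Suc.prems] by (intro mult_right_mono) auto
    finally show ?case by (simp add: mult.assoc)
  qed
  from this[of "N - 1"] ch show ?thesis
    by (simp add: kobayashi_chain_def c_def)
qed

lemma exp_neg_ereal_Inf_le:
  fixes X :: "real set"
  assumes "q > 0" "\<And>S. S \<in> X \<Longrightarrow> exp (- S) \<le> q"
  shows "exp_neg_ereal (Inf (ereal ` X)) \<le> q"
proof (cases "X = {}")
  case True
  then show ?thesis using assms by (simp add: exp_neg_ereal_def top_ereal_def)
next
  case False
  then obtain S0 where S0: "S0 \<in> X" by blast
  have lb: "ereal (- ln q) \<le> Inf (ereal ` X)"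
  proof (rule Inf_greatest)
    fix y assume "y \<in> ereal ` X"
    then obtain S where "S \<in> X" "y = ereal S" by blast
    then have "- S \<le> ln q"
      using assms by (metis exp_ln exp_le_cancel_iff)
    then show "ereal (- ln q) \<le> y" using \<open>y = ereal S\<close> by simp
  qed
  moreover have "Inf (ereal ` X) \<le> ereal S0" using S0 by (simp add: Inf_lower)
  ultimately obtain k where k: "Inf (ereal ` X) = ereal k" "- ln q \<le> k"
    by (cases "Inf (ereal ` X)") auto
  then have "exp (- k) \<le> exp (ln q)" by simp
  then show ?thesis using k assms(1) by (simp add: exp_neg_ereal_def)
qed

lemma kobayashi_dist_Harnack:
  assumes harnack: "\<And>g \<xi>. holomorphic_disk A Jc g \<Longrightarrow> norm \<xi> < 1 \<Longrightarrow>
                     u (g \<xi>) \<le> u (g 0) * ((1 - norm \<xi>) / (1 + norm \<xi>))"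
    and neg: "\<And>w. u w < 0"
  shows "u z \<le> u z' * exp_neg_ereal (kobayashi_dist A Jc z z')"
proof -
  define X where "X = {(\<Sum>j<N. ln ((1 + norm (\<zeta> j)) / (1 - norm (\<zeta> j)))) | N h \<zeta>.
                         kobayashi_chain A Jc N h \<zeta> z z'}"
  have "kobayashi_dist A Jc z z' = Inf (ereal ` X)"
    unfolding kobayashi_dist_def X_def by (rule arg_cong[where f = Inf]) blast
  moreover have "exp_neg_ereal (Inf (ereal ` X)) \<le> u z / u z'"
  proof (rule exp_neg_ereal_Inf_le)
    show "u z / u z' > 0" using neg[of z] neg[of z'] by (simp add: divide_neg_neg)
  next
    fix S assume "S \<in> X"
    then obtain N h \<zeta> where S: "S = (\<Sum>j<N. ln ((1 + norm (\<zeta> j)) / (1 - norm (\<zeta> j))))"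
      and ch: "kobayashi_chain A Jc N h \<zeta> z z'"
      unfolding X_def by blast
    have "exp (- ln ((1 + norm (\<zeta> j)) / (1 - norm (\<zeta> j))))
            = (1 - norm (\<zeta> j)) / (1 + norm (\<zeta> j))" if "j < N" for j
    proof -
      have "norm (\<zeta> j) < 1" using ch that by (simp add: kobayashi_chain_def)
      then have "(1 + norm (\<zeta> j)) / (1 - norm (\<zeta> j)) > 0"
        by (intro divide_pos_pos) (auto intro: add_pos_nonneg)
      then show ?thesis by (simp add: exp_minus)
    qed
    then have "exp (- S) = (\<Prod>j<N. (1 - norm (\<zeta> j)) / (1 + norm (\<zeta> j)))"
      unfolding S sum_negf[symmetric] exp_sum[OF finite_lessThan] by (rule prod.cong[OF refl]) simp
    then have "u z \<le> u z' * exp (- S)"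
      using kobayashi_chain_Harnack[OF ch harnack] by simp
    then show "exp (- S) \<le> u z / u z'"
      using neg[of z'] by (simp add: le_divide_eq mult.commute)
  qed
  ultimately have "u z' * (u z / u z') \<le> u z' * exp_neg_ereal (kobayashi_dist A Jc z z')"
    using neg[of z'] by (intro mult_left_mono_neg) auto
  then show ?thesis using neg[of z'] by simp
qed

lemma le_powr_of_ln_le:
  fixes a b M \<alpha> :: real
  assumes "M > 0" "a > 0" "b > 0" "ln (a / M) \<le> ln (b / M) * \<alpha>"
  shows "a \<le> b powr \<alpha> * M powr (1 - \<alpha>)"
proof -
  have "a / M = exp (ln (a / M))" using assms by simp
  also have "\<dots> \<le> exp (\<alpha> * ln (b / M))" using assms(4) by (simp add: mult.commute)
  also have "\<dots> = (b / M) powr \<alpha>" using assms by (simp add: powr_def)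
  also have "\<dots> = b powr \<alpha> / M powr \<alpha>" using assms by (simp add: powr_divide)
  finally have "a \<le> M * (b powr \<alpha> / M powr \<alpha>)"
    using assms by (simp add: pos_divide_le_eq mult.commute)
  also have "\<dots> = b powr \<alpha> * M powr (1 - \<alpha>)" using assms by (simp add: powr_diff)
  finally show ?thesis .
qed

theorem mainTheorem2:
  fixes A :: "('b::topological_space, 'e::banach) chart set"
    and Jc :: "('b, 'e) chart \<Rightarrow> 'e \<Rightarrow> 'e \<Rightarrow>\<^sub>L 'e"
    and f :: "'b \<Rightarrow> complex" and z0 :: 'b and M :: real
  assumes "almost_complex_banach_manifold A Jc"
    and "holomorphic_function A Jc f"
    and "M > 0"
    and "\<forall>z. 0 < norm (f z) \<and> norm (f z) < M"
  shows "\<forall>z. norm (f z) \<le> norm (f z0) powr (exp_neg_ereal (kobayashi_dist A Jc z z0))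
                         * M powr (1 - exp_neg_ereal (kobayashi_dist A Jc z z0))"
proof
  fix z
  define u where "u w = ln (norm (f w) / M)" for w
  have "u (h \<xi>) \<le> u (h 0) * ((1 - norm \<xi>) / (1 + norm \<xi>))"
    if "holomorphic_disk A Jc h" "norm \<xi> < 1" for h \<xi>
    using ln_norm_Harnack[OF holomorphic_function_comp_disk[OF assms(1,2) that(1)] _ that(2)]
      assms(4) unfolding u_def by auto
  moreover have "u w < 0" for w
    using assms(3,4) unfolding u_def by (simp add: ln_less_zero)
  ultimately have "u z \<le> u z0 * exp_neg_ereal (kobayashi_dist A Jc z z0)"
    by (rule kobayashi_dist_Harnack)
  then show "norm (f z) \<le> norm (f z0) powr (exp_neg_ereal (kobayashi_dist A Jc z z0))
                         * M powr (1 - exp_neg_ereal (kobayashi_dist A Jc z z0))"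
    using le_powr_of_ln_le[OF assms(3)] assms(4) unfolding u_def by blast
qed

end
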